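(* For each $\Sigma$-tree $X$ there is a pruned tree which is a retract of $X$, and it is unique up to isomorphism: any two pruned retracts of $X$ are isomorphic.
   Context: Let $\Sigma$ be a set. A $\Sigma$-tree is a finite directed graph whose underlying undirected graph is a tree, edges labelled by elements of $\Sigma$, with distinguished start and end vertices such that there is a (possibly empty) directed path from the start vertex to the end vertex. A morphism $X\to Y$ of $\Sigma$-trees maps vertices to vertices and edges to edges, preserving the initial vertex, terminal vertex and label of each edge, and maps the start and end vertices of $X$ to those of $Y$; an isomorphism is a morphism bijective on vertices and edges. A retraction of $X$ is an idempotent morphism $X\to X$; its image (a subtree with the same start and end vertices) is a retract of $X$. $X$ is pruned if it admits no non-identity retraction. *)

theory Defs
  imports Main
begin

record ('v, 'e, 's) sgraph =
  verts :: "'v set"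
  edges :: "'e set"
  src :: "'e \<Rightarrow> 'v"
  tgt :: "'e \<Rightarrow> 'v"
  lab :: "'e \<Rightarrow> 's"
  start :: 'v
  fin :: 'v

inductive uwalk :: "('v, 'e, 's) sgraph \<Rightarrow> 'v \<Rightarrow> 'e list \<Rightarrow> 'v \<Rightarrow> bool" for X where
  unil: "u \<in> verts X \<Longrightarrow> uwalk X u [] u"
| ufwd: "e \<in> edges X \<Longrightarrow> src X e = u \<Longrightarrow> uwalk X (tgt X e) es v \<Longrightarrow> uwalk X u (e # es) v"
| ubwd: "e \<in> edges X \<Longrightarrow> tgt X e = u \<Longrightarrow> uwalk X (src X e) es v \<Longrightarrow> uwalk X u (e # es) v"

inductive dwalk :: "('v, 'e, 's) sgraph \<Rightarrow> 'v \<Rightarrow> 'e list \<Rightarrow> 'v \<Rightarrow> bool" for X where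
  dnil: "u \<in> verts X \<Longrightarrow> dwalk X u [] u"
| dcons: "e \<in> edges X \<Longrightarrow> src X e = u \<Longrightarrow> dwalk X (tgt X e) es v \<Longrightarrow> dwalk X u (e # es) v"

definition wf_sgraph :: "('v, 'e, 's) sgraph \<Rightarrow> bool" where
  "wf_sgraph X \<longleftrightarrow> finite (verts X) \<and> finite (edges X)
     \<and> (\<forall>e\<in>edges X. src X e \<in> verts X \<and> tgt X e \<in> verts X)
     \<and> start X \<in> verts X \<and> fin X \<in> verts X"

text \<open>Underlying undirected multigraph is a tree: nonempty, connected, and without
  cycles (a cycle = nonempty closed walk using pairwise distinct edges; this
  includes loops and pairs of parallel edges).\<close>
definition underlying_tree :: "('v, 'e, 's) sgraph \<Rightarrow> bool" where
  "underlying_tree X \<longleftrightarrow> verts X \<noteq> {}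
     \<and> (\<forall>u\<in>verts X. \<forall>v\<in>verts X. \<exists>es. uwalk X u es v)
     \<and> \<not> (\<exists>u es. es \<noteq> [] \<and> distinct es \<and> uwalk X u es u)"

definition sigma_tree :: "'s set \<Rightarrow> ('v, 'e, 's) sgraph \<Rightarrow> bool" where
  "sigma_tree \<Sigma> X \<longleftrightarrow> wf_sgraph X \<and> underlying_tree X
     \<and> lab X ` edges X \<subseteq> \<Sigma>
     \<and> (\<exists>es. dwalk X (start X) es (fin X))"

definition tree_morphism ::
  "('v, 'e, 's) sgraph \<Rightarrow> ('w, 'f, 's) sgraph \<Rightarrow> ('v \<Rightarrow> 'w) \<Rightarrow> ('e \<Rightarrow> 'f) \<Rightarrow> bool" where
  "tree_morphism X Y fv fe \<longleftrightarrow>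
     (\<forall>v\<in>verts X. fv v \<in> verts Y)
   \<and> (\<forall>e\<in>edges X. fe e \<in> edges Y
        \<and> src Y (fe e) = fv (src X e) \<and> tgt Y (fe e) = fv (tgt X e)
        \<and> lab Y (fe e) = lab X e)
   \<and> fv (start X) = start Y \<and> fv (fin X) = fin Y"

definition tree_iso ::
  "('v, 'e, 's) sgraph \<Rightarrow> ('w, 'f, 's) sgraph \<Rightarrow> ('v \<Rightarrow> 'w) \<Rightarrow> ('e \<Rightarrow> 'f) \<Rightarrow> bool" where
  "tree_iso X Y fv fe \<longleftrightarrow> tree_morphism X Y fv fe
     \<and> bij_betw fv (verts X) (verts Y) \<and> bij_betw fe (edges X) (edges Y)"

definition isomorphic :: "('v, 'e, 's) sgraph \<Rightarrow> ('w, 'f, 's) sgraph \<Rightarrow> bool" where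
  "isomorphic X Y \<longleftrightarrow> (\<exists>fv fe. tree_iso X Y fv fe)"

definition retraction :: "('v, 'e, 's) sgraph \<Rightarrow> ('v \<Rightarrow> 'v) \<Rightarrow> ('e \<Rightarrow> 'e) \<Rightarrow> bool" where
  "retraction X fv fe \<longleftrightarrow> tree_morphism X X fv fe
     \<and> (\<forall>v\<in>verts X. fv (fv v) = fv v) \<and> (\<forall>e\<in>edges X. fe (fe e) = fe e)"

definition image_sub :: "('v, 'e, 's) sgraph \<Rightarrow> ('v \<Rightarrow> 'v) \<Rightarrow> ('e \<Rightarrow> 'e) \<Rightarrow> ('v, 'e, 's) sgraph" where
  "image_sub X fv fe = X\<lparr> verts := fv ` verts X, edges := fe ` edges X \<rparr>"

definition is_retract :: "('v, 'e, 's) sgraph \<Rightarrow> ('v, 'e, 's) sgraph \<Rightarrow> bool" where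
  "is_retract R X \<longleftrightarrow> (\<exists>fv fe. retraction X fv fe \<and> R = image_sub X fv fe)"

definition pruned :: "('v, 'e, 's) sgraph \<Rightarrow> bool" where
  "pruned X \<longleftrightarrow> (\<forall>fv fe. retraction X fv fe \<longrightarrow>
       (\<forall>v\<in>verts X. fv v = v) \<and> (\<forall>e\<in>edges X. fe e = e))"

end

theory Submission
  imports Defs "HOL-Library.FuncSet"
begin

text \<open>Existence: a retraction of X whose image is as small as possible has a pruned image,
  because a non-identity retraction of the image composes with it to a retraction of X
  with strictly smaller image. Uniqueness: a finite pruned graph R has only bijective
  endomorphisms, since some power of an endomorphism is idempotent, i.e. a retraction,
  hence the identity. For pruned retracts R1, R2 of X, the retractions of X restrict to
  morphisms R1 \<rightarrow> R2 \<rightarrow> R1 whose composites are bijective, so R1 \<rightarrow> R2 is an isomorphism.\<close>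

lemma image_sub_simps [simp]:
  "verts (image_sub X f g) = f ` verts X"
  "edges (image_sub X f g) = g ` edges X"
  "src (image_sub X f g) = src X"
  "tgt (image_sub X f g) = tgt X"
  "lab (image_sub X f g) = lab X"
  "start (image_sub X f g) = start X"
  "fin (image_sub X f g) = fin X"
  by (simp_all add: image_sub_def)

lemma image_sub_image_sub:
  "image_sub (image_sub X f e) g ge = image_sub X (g \<circ> f) (ge \<circ> e)"
  by (simp add: image_sub_def image_comp)

subsection \<open>Idempotent powers of self-maps of finite sets\<close>

lemma funpow_maps_into:
  assumes "h ` A \<subseteq> A"
  shows "(h ^^ n) ` A \<subseteq> A"
  by (induction n) (use assms in auto)

lemma funpow_eventually_periodic:
  assumes "finite A" "h ` A \<subseteq> A"
  obtains i j where "i < j" "\<And>x. x \<in> A \<Longrightarrow> (h ^^ i) x = (h ^^ j) x"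
proof -
  define F where "F n = restrict (h ^^ n) A" for n
  have "range F \<subseteq> PiE A (\<lambda>_. A)"
    using funpow_maps_into[OF assms(2)] by (force simp: F_def)
  then have "finite (range F)"
    by (rule finite_subset) (simp add: finite_PiE assms(1))
  then have "\<not> inj F"
    using finite_imageD infinite_UNIV_nat by metis
  then obtain i j where "i < j" "F i = F j"
    unfolding inj_def by (metis linorder_neqE_nat)
  then show thesis
    using that unfolding F_def by (metis restrict_apply')
qed

lemma funpow_idempotent_multiples:
  assumes "finite A" "h ` A \<subseteq> A"
  obtains p where "p > 0"
    "\<And>k x. k > 0 \<Longrightarrow> x \<in> A \<Longrightarrow> (h ^^ (k * p)) ((h ^^ (k * p)) x) = (h ^^ (k * p)) x"
proof -
  obtain i j where ij: "i < j" "\<And>x. x \<in> A \<Longrightarrow> (h ^^ i) x = (h ^^ j) x"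
    using funpow_eventually_periodic[OF assms] by blast
  define p where "p = j - i"
  have "p > 0" using ij(1) by (simp add: p_def)
  have shift: "(h ^^ (n + p)) x = (h ^^ n) x" if "i \<le> n" "x \<in> A" for n x
  proof -
    have "n + p = (n - i) + j" "n = (n - i) + i" using that ij(1) by (simp_all add: p_def)
    then show ?thesis
      by (metis funpow_add comp_apply ij(2) that(2))
  qed
  have shifts: "(h ^^ (n + k * p)) x = (h ^^ n) x" if "i \<le> n" "x \<in> A" for n k x
  proof (induction k)
    case (Suc k)
    have "(h ^^ (n + Suc k * p)) x = (h ^^ ((n + k * p) + p)) x" by (simp add: ac_simps)
    also have "\<dots> = (h ^^ n) x" using shift[of "n + k * p"] that Suc.IH by simp
    finally show ?case .
  qed simp
  define q where "q = (i + 1) * p"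
  show thesis
  proof
    show "q > 0" using \<open>p > 0\<close> by (simp add: q_def)
    fix k :: nat and x assume "k > 0" "x \<in> A"
    have "1 \<le> k * p" using \<open>k > 0\<close> \<open>p > 0\<close> by simp
    from mult_le_mono2[OF this, of "i + 1"] have "i + 1 \<le> (i + 1) * (k * p)" by simp
    then have "i \<le> k * q" by (simp add: q_def ac_simps)
    have "(h ^^ (k * q)) ((h ^^ (k * q)) x) = (h ^^ (k * q + k * q)) x"
      by (simp add: funpow_add)
    also have "\<dots> = (h ^^ (k * q + (k * (i + 1)) * p)) x"
      by (simp add: q_def algebra_simps)
    also have "\<dots> = (h ^^ (k * q)) x"
      using shifts \<open>i \<le> k * q\<close> \<open>x \<in> A\<close> by blast
    finally show "(h ^^ (k * q)) ((h ^^ (k * q)) x) = (h ^^ (k * q)) x" .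
  qed
qed

lemma funpow_id_imp_bij_betw:
  assumes "h ` A \<subseteq> A" "m > 0" "\<And>x. x \<in> A \<Longrightarrow> (h ^^ m) x = x"
  shows "bij_betw h A A"
proof -
  obtain k where m: "m = Suc k" using assms(2) gr0_implies_Suc by blast
  have inv: "(h ^^ k) (h x) = x" "h ((h ^^ k) x) = x" if "x \<in> A" for x
    using assms(3)[OF that] unfolding m by (simp_all add: funpow_swap1)
  show ?thesis
  proof (rule bij_betw_byWitness[where f' = "h ^^ k"])
    show "(h ^^ k) ` A \<subseteq> A" using funpow_maps_into[OF assms(1)] .
  qed (use assms(1) inv in auto)
qed

lemma bij_betw_of_bij_composites:
  assumes "a ` A \<subseteq> B" "b ` B \<subseteq> A"
    and "bij_betw (b \<circ> a) A A" "bij_betw (a \<circ> b) B B"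
  shows "bij_betw a A B"
proof -
  have "inj_on a A"
    using assms(3) inj_on_imageI2 unfolding bij_betw_def by blast
  moreover have "B \<subseteq> a ` A"
  proof -
    have "B = a ` b ` B" using assms(4) by (simp add: bij_betw_def image_comp)
    also have "\<dots> \<subseteq> a ` A" using assms(2) by blast
    finally show ?thesis .
  qed
  ultimately show ?thesis using assms(1) by (auto simp: bij_betw_def)
qed

lemma tree_morphism_id: "tree_morphism X X id id"
  by (simp add: tree_morphism_def)

lemma tree_morphism_comp:
  "tree_morphism X Y a b \<Longrightarrow> tree_morphism Y Z c d \<Longrightarrow> tree_morphism X Z (c \<circ> a) (d \<circ> b)"
  unfolding tree_morphism_def by auto

lemma tree_morphism_funpow:
  assumes "tree_morphism X X h he"
  shows "tree_morphism X X (h ^^ n) (he ^^ n)"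
proof (induction n)
  case 0
  then show ?case by (simp add: tree_morphism_def)
next
  case (Suc n)
  then show ?case using tree_morphism_comp[OF Suc.IH assms] by (simp add: o_def)
qed

lemma tree_morphism_maps_into:
  assumes "tree_morphism X Y f e"
  shows "f ` verts X \<subseteq> verts Y" "e ` edges X \<subseteq> edges Y"
  using assms unfolding tree_morphism_def by auto

lemma retraction_fixes_image:
  assumes "retraction X f e"
  shows "v \<in> f ` verts X \<Longrightarrow> f v = v" "d \<in> e ` edges X \<Longrightarrow> e d = d"
  using assms unfolding retraction_def by auto

lemma retraction_onto_image:
  "retraction X f e \<Longrightarrow> tree_morphism X (image_sub X f e) f e"
  unfolding retraction_def tree_morphism_def by fastforce

lemma retraction_image_subgraph:
  assumes "retraction X f e"
  shows "f ` verts X \<subseteq> verts X" "e ` edges X \<subseteq> edges X"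
  using assms unfolding retraction_def tree_morphism_def by auto

lemma retraction_between_images:
  assumes "retraction X f1 e1" "retraction X f2 e2"
  shows "tree_morphism (image_sub X f1 e1) (image_sub X f2 e2) f2 e2"
proof -
  have "tree_morphism X X f2 e2" using assms(2) by (simp add: retraction_def)
  with retraction_image_subgraph[OF assms(1)] show ?thesis
    unfolding tree_morphism_def by auto
qed

lemma retraction_comp:
  assumes r: "retraction X f e" and rg: "retraction (image_sub X f e) g ge"
  shows "retraction X (g \<circ> f) (ge \<circ> e)"
proof -
  have "tree_morphism X (image_sub X f e) (g \<circ> f) (ge \<circ> e)"
    using tree_morphism_comp[OF retraction_onto_image[OF r]] rg
    unfolding retraction_def by blast
  then have "tree_morphism X X (g \<circ> f) (ge \<circ> e)"
    using retraction_image_subgraph[OF r] unfolding tree_morphism_def by auto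
  moreover have "f (g (f v)) = g (f v)" if "v \<in> verts X" for v
  proof -
    have "g (f v) \<in> f ` verts X"
      using rg that unfolding retraction_def tree_morphism_def by simp
    then show ?thesis using retraction_fixes_image(1)[OF r] by blast
  qed
  moreover have "e (ge (e d)) = ge (e d)" if "d \<in> edges X" for d
  proof -
    have "ge (e d) \<in> e ` edges X"
      using rg that unfolding retraction_def tree_morphism_def by simp
    then show ?thesis using retraction_fixes_image(2)[OF r] by blast
  qed
  moreover have "g (g (f v)) = g (f v)" if "v \<in> verts X" for v
    using rg that unfolding retraction_def by simp
  moreover have "ge (ge (e d)) = ge (e d)" if "d \<in> edges X" for d
    using rg that unfolding retraction_def by simp
  ultimately show ?thesis
    unfolding retraction_def by simp
qed

subsection \<open>Retracts of trees are trees\<close>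

lemma uwalk_tree_morphism:
  assumes "tree_morphism X Y f e"
  shows "uwalk X u es v \<Longrightarrow> uwalk Y (f u) (map e es) (f v)"
  by (induction rule: uwalk.induct)
    (use assms in \<open>auto simp: tree_morphism_def intro: uwalk.intros\<close>)

lemma dwalk_tree_morphism:
  assumes "tree_morphism X Y f e"
  shows "dwalk X u es v \<Longrightarrow> dwalk Y (f u) (map e es) (f v)"
  by (induction rule: dwalk.induct)
    (use assms in \<open>auto simp: tree_morphism_def intro: dwalk.intros\<close>)

lemma uwalk_image_sub:
  assumes "f ` verts X \<subseteq> verts X" "e ` edges X \<subseteq> edges X"
  shows "uwalk (image_sub X f e) u es v \<Longrightarrow> uwalk X u es v"
  by (induction rule: uwalk.induct) (use assms in \<open>auto intro: uwalk.intros\<close>)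

lemma underlying_tree_retract:
  assumes X: "underlying_tree X" and r: "retraction X f e"
  shows "underlying_tree (image_sub X f e)"
  unfolding underlying_tree_def
proof (intro conjI ballI)
  show "verts (image_sub X f e) \<noteq> {}"
    using X unfolding underlying_tree_def by simp
next
  fix u v assume "u \<in> verts (image_sub X f e)" "v \<in> verts (image_sub X f e)"
  then obtain u' v' where "u' \<in> verts X" "v' \<in> verts X" "u = f u'" "v = f v'"
    by auto
  moreover from this obtain es where "uwalk X u' es v'"
    using X unfolding underlying_tree_def by blast
  ultimately show "\<exists>es. uwalk (image_sub X f e) u es v"
    using uwalk_tree_morphism[OF retraction_onto_image[OF r]] by blast
next
  show "\<not> (\<exists>u es. es \<noteq> [] \<and> distinct es \<and> uwalk (image_sub X f e) u es u)"
    using X uwalk_image_sub[OF retraction_image_subgraph[OF r]]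
    unfolding underlying_tree_def by blast
qed

lemma sigma_tree_retract:
  assumes X: "sigma_tree \<Sigma> X" and r: "retraction X f e"
  shows "sigma_tree \<Sigma> (image_sub X f e)"
proof -
  let ?R = "image_sub X f e"
  have onto: "tree_morphism X ?R f e" using retraction_onto_image[OF r] .
  note sub = retraction_image_subgraph[OF r]
  have "wf_sgraph X" "lab X ` edges X \<subseteq> \<Sigma>"
    using X unfolding sigma_tree_def by blast+
  then have "wf_sgraph ?R" "lab ?R ` edges ?R \<subseteq> \<Sigma>"
    using onto sub unfolding wf_sgraph_def tree_morphism_def by (auto intro: image_eqI[OF sym])
  moreover have "underlying_tree ?R"
    using X underlying_tree_retract r unfolding sigma_tree_def by blast
  moreover obtain es where "dwalk X (start X) es (fin X)"
    using X unfolding sigma_tree_def by blast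
  then have "dwalk ?R (start ?R) (map e es) (fin ?R)"
    using dwalk_tree_morphism[OF onto] onto unfolding tree_morphism_def by fastforce
  ultimately show ?thesis unfolding sigma_tree_def by blast
qed

subsection \<open>Pruned retracts\<close>

definition graph_size :: "('v, 'e, 's) sgraph \<Rightarrow> nat" where
  "graph_size X = card (verts X) + card (edges X)"

lemma graph_size_retract_less:
  assumes fin: "finite (verts R)" "finite (edges R)" and r: "retraction R g ge"
    and nonid: "\<not> ((\<forall>v\<in>verts R. g v = v) \<and> (\<forall>d\<in>edges R. ge d = d))"
  shows "graph_size (image_sub R g ge) < graph_size R"
proof -
  note sub = retraction_image_subgraph[OF r]
  have le: "card (g ` verts R) \<le> card (verts R)" "card (ge ` edges R) \<le> card (edges R)"
    using fin sub by (simp_all add: card_mono)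
  from nonid consider v where "v \<in> verts R" "g v \<noteq> v" | d where "d \<in> edges R" "ge d \<noteq> d"
    by blast
  then have "card (g ` verts R) < card (verts R) \<or> card (ge ` edges R) < card (edges R)"
  proof cases
    case 1
    then have "v \<notin> g ` verts R" using retraction_fixes_image(1)[OF r] by blast
    then show ?thesis using 1 sub fin by (metis psubset_card_mono psubsetI)
  next
    case 2
    then have "d \<notin> ge ` edges R" using retraction_fixes_image(2)[OF r] by blast
    then show ?thesis using 2 sub fin by (metis psubset_card_mono psubsetI)
  qed
  with le show ?thesis unfolding graph_size_def by auto
qed

lemma pruned_retract_exists:
  assumes fin: "finite (verts X)" "finite (edges X)"
  obtains f e where "retraction X f e" "pruned (image_sub X f e)"
proof -
  have "retraction X id id" by (simp add: retraction_def tree_morphism_id)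
  then obtain fe where r: "retraction X (fst fe) (snd fe)"
    and least: "\<And>f e. retraction X f e
       \<Longrightarrow> graph_size (image_sub X (fst fe) (snd fe)) \<le> graph_size (image_sub X f e)"
    using ex_has_least_nat[of "\<lambda>fe. retraction X (fst fe) (snd fe)" "(id, id)"
        "\<lambda>fe. graph_size (image_sub X (fst fe) (snd fe))"] by fastforce
  have "pruned (image_sub X (fst fe) (snd fe))"
    unfolding pruned_def
  proof (intro allI impI)
    fix g ge assume rg: "retraction (image_sub X (fst fe) (snd fe)) g ge"
    show "(\<forall>v\<in>verts (image_sub X (fst fe) (snd fe)). g v = v)
        \<and> (\<forall>d\<in>edges (image_sub X (fst fe) (snd fe)). ge d = d)"
      using graph_size_retract_less[OF _ _ rg] least[OF retraction_comp[OF r rg]] fin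
      by (fastforce simp: image_sub_image_sub)
  qed
  with r show thesis using that by blast
qed

lemma pruned_endomorphism_bij:
  assumes fin: "finite (verts R)" "finite (edges R)" and pr: "pruned R"
    and h: "tree_morphism R R h he"
  shows "bij_betw h (verts R) (verts R)" "bij_betw he (edges R) (edges R)"
proof -
  note maps = tree_morphism_maps_into[OF h]
  obtain p1 where p1: "p1 > 0"
    "\<And>k x. k > 0 \<Longrightarrow> x \<in> verts R \<Longrightarrow> (h ^^ (k * p1)) ((h ^^ (k * p1)) x) = (h ^^ (k * p1)) x"
    using funpow_idempotent_multiples[OF fin(1) maps(1)] by blast
  obtain p2 where p2: "p2 > 0"
    "\<And>k x. k > 0 \<Longrightarrow> x \<in> edges R \<Longrightarrow> (he ^^ (k * p2)) ((he ^^ (k * p2)) x) = (he ^^ (k * p2)) x"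
    using funpow_idempotent_multiples[OF fin(2) maps(2)] by blast
  define m where "m = p2 * p1"
  have "retraction R (h ^^ m) (he ^^ m)"
    unfolding retraction_def
    using tree_morphism_funpow[OF h] p1(2)[OF p2(1)] p2(2)[OF p1(1)]
    by (simp add: m_def mult.commute)
  then have "\<And>v. v \<in> verts R \<Longrightarrow> (h ^^ m) v = v" "\<And>d. d \<in> edges R \<Longrightarrow> (he ^^ m) d = d"
    using pr unfolding pruned_def by blast+
  moreover have "m > 0" using p1 p2 by (simp add: m_def)
  ultimately show "bij_betw h (verts R) (verts R)" "bij_betw he (edges R) (edges R)"
    using funpow_id_imp_bij_betw maps by blast+
qed

lemma pruned_retracts_isomorphic:
  assumes fin: "finite (verts X)" "finite (edges X)"
    and r1: "retraction X f1 e1" and p1: "pruned (image_sub X f1 e1)"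
    and r2: "retraction X f2 e2" and p2: "pruned (image_sub X f2 e2)"
  shows "isomorphic (image_sub X f1 e1) (image_sub X f2 e2)"
proof -
  let ?R1 = "image_sub X f1 e1" and ?R2 = "image_sub X f2 e2"
  have fin_images: "finite (verts (image_sub X f e))" "finite (edges (image_sub X f e))" for f e
    using fin by simp_all
  have a: "tree_morphism ?R1 ?R2 f2 e2" and b: "tree_morphism ?R2 ?R1 f1 e1"
    using retraction_between_images r1 r2 by blast+
  note ba = pruned_endomorphism_bij[OF fin_images p1 tree_morphism_comp[OF a b]]
  note ab = pruned_endomorphism_bij[OF fin_images p2 tree_morphism_comp[OF b a]]
  have "bij_betw f2 (verts ?R1) (verts ?R2)" "bij_betw e2 (edges ?R1) (edges ?R2)"
    using bij_betw_of_bij_composites tree_morphism_maps_into[OF a] tree_morphism_maps_into[OF b]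
      ba ab by blast+
  with a show ?thesis unfolding isomorphic_def tree_iso_def by blast
qed

theorem proposition3p5:
  fixes \<Sigma> :: "'s set" and X :: "('v, 'e, 's) sgraph"
  assumes "sigma_tree \<Sigma> X"
  shows "(\<exists>R. is_retract R X \<and> sigma_tree \<Sigma> R \<and> pruned R)
       \<and> (\<forall>R1 R2. is_retract R1 X \<and> pruned R1 \<and> is_retract R2 X \<and> pruned R2
            \<longrightarrow> isomorphic R1 R2)"
proof -
  have fin: "finite (verts X)" "finite (edges X)"
    using assms by (simp_all add: sigma_tree_def wf_sgraph_def)
  obtain f e where "retraction X f e" "pruned (image_sub X f e)"
    using pruned_retract_exists[OF fin] .
  then have "\<exists>R. is_retract R X \<and> sigma_tree \<Sigma> R \<and> pruned R"
    using sigma_tree_retract[OF assms] unfolding is_retract_def by blast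
  moreover have "\<forall>R1 R2. is_retract R1 X \<and> pruned R1 \<and> is_retract R2 X \<and> pruned R2
      \<longrightarrow> isomorphic R1 R2"
    using pruned_retracts_isomorphic[OF fin] unfolding is_retract_def by blast
  ultimately show ?thesis by blast
qed

end
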